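(* Let $k\ge 1$ and let $G$ be a graph of order $n$ with minimum degree $\delta\ge k+1$. Then $\Gamma_{\times k,t}(G)\le n-\delta+k$. Moreover the bound is sharp: for all integers $\delta\ge k+1\ge 2$ and $b\ge\lceil \delta/(k+1)\rceil$, the join $G_b=H_b\vee T$, where $H_b$ is the disjoint union of $b$ copies of $K_{k+1}$ and $T$ is an edgeless graph on $\delta-k$ vertices, has minimum degree $\delta$, order $n=b(k+1)+\delta-k$, and $\Gamma_{\times k,t}(G_b)=n-\delta+k$.
   Context: A set $S\subseteq V(G)$ is a $k$-tuple total dominating set ($k$TDS) of a graph $G$ with $\delta(G)\ge k$ if $|N_G(x)\cap S|\ge k$ for every $x\in V(G)$. The upper $k$-tuple total domination number $\Gamma_{\times k,t}(G)$ is the maximum cardinality of a minimal (with respect to inclusion) $k$TDS of $G$. The join $A\vee B$ of disjoint graphs is their union together with all edges between $V(A)$ and $V(B)$. *)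

theory Defs
  imports Complex_Main
begin

definition simple_graph :: "'a set \<Rightarrow> ('a \<Rightarrow> 'a \<Rightarrow> bool) \<Rightarrow> bool" where
  "simple_graph V E \<longleftrightarrow> finite V \<and> (\<forall>x y. E x y \<longrightarrow> x \<in> V \<and> y \<in> V)
     \<and> (\<forall>x y. E x y \<longrightarrow> E y x) \<and> (\<forall>x. \<not> E x x)"

definition nbhd :: "'a set \<Rightarrow> ('a \<Rightarrow> 'a \<Rightarrow> bool) \<Rightarrow> 'a \<Rightarrow> 'a set" where
  "nbhd V E x = {y \<in> V. E x y}"

definition degree :: "'a set \<Rightarrow> ('a \<Rightarrow> 'a \<Rightarrow> bool) \<Rightarrow> 'a \<Rightarrow> nat" where
  "degree V E x = card (nbhd V E x)"

definition min_degree :: "'a set \<Rightarrow> ('a \<Rightarrow> 'a \<Rightarrow> bool) \<Rightarrow> nat" where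
  "min_degree V E = Min (degree V E ` V)"

definition is_kTDS :: "'a set \<Rightarrow> ('a \<Rightarrow> 'a \<Rightarrow> bool) \<Rightarrow> nat \<Rightarrow> 'a set \<Rightarrow> bool" where
  "is_kTDS V E k S \<longleftrightarrow> S \<subseteq> V \<and> (\<forall>x\<in>V. card (nbhd V E x \<inter> S) \<ge> k)"

definition is_minimal_kTDS :: "'a set \<Rightarrow> ('a \<Rightarrow> 'a \<Rightarrow> bool) \<Rightarrow> nat \<Rightarrow> 'a set \<Rightarrow> bool" where
  "is_minimal_kTDS V E k S \<longleftrightarrow> is_kTDS V E k S \<and> (\<forall>T. T \<subset> S \<longrightarrow> \<not> is_kTDS V E k T)"

definition upper_ktuple_tdom :: "'a set \<Rightarrow> ('a \<Rightarrow> 'a \<Rightarrow> bool) \<Rightarrow> nat \<Rightarrow> nat" where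
  "upper_ktuple_tdom V E k = Max {card S | S. is_minimal_kTDS V E k S}"

definition join_V :: "'a set \<Rightarrow> 'b set \<Rightarrow> ('a + 'b) set" where
  "join_V VA VB = Inl ` VA \<union> Inr ` VB"

fun join_E :: "'a set \<Rightarrow> ('a \<Rightarrow> 'a \<Rightarrow> bool) \<Rightarrow> 'b set \<Rightarrow> ('b \<Rightarrow> 'b \<Rightarrow> bool)
    \<Rightarrow> ('a + 'b) \<Rightarrow> ('a + 'b) \<Rightarrow> bool" where
  "join_E VA EA VB EB (Inl x) (Inl y) = EA x y"
| "join_E VA EA VB EB (Inr x) (Inr y) = EB x y"
| "join_E VA EA VB EB (Inl x) (Inr y) = (x \<in> VA \<and> y \<in> VB)"
| "join_E VA EA VB EB (Inr x) (Inl y) = (x \<in> VB \<and> y \<in> VA)"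

text \<open>H_b: disjoint union of b copies of K_{k+1}; vertex (i,j) is vertex j of copy i.\<close>
definition Hb_V :: "nat \<Rightarrow> nat \<Rightarrow> (nat \<times> nat) set" where
  "Hb_V b k = {(i, j). i < b \<and> j < k + 1}"

definition Hb_E :: "nat \<Rightarrow> nat \<Rightarrow> (nat \<times> nat) \<Rightarrow> (nat \<times> nat) \<Rightarrow> bool" where
  "Hb_E b k u v \<longleftrightarrow> u \<in> Hb_V b k \<and> v \<in> Hb_V b k \<and> fst u = fst v \<and> snd u \<noteq> snd v"

definition T_V :: "nat \<Rightarrow> nat set" where
  "T_V m = {..<m}"

definition T_E :: "nat \<Rightarrow> nat \<Rightarrow> bool" where
  "T_E x y = False"

definition Gb_V :: "nat \<Rightarrow> nat \<Rightarrow> nat \<Rightarrow> ((nat \<times> nat) + nat) set" where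
  "Gb_V b k \<delta> = join_V (Hb_V b k) (T_V (\<delta> - k))"

definition Gb_E :: "nat \<Rightarrow> nat \<Rightarrow> nat \<Rightarrow> ((nat \<times> nat) + nat) \<Rightarrow> ((nat \<times> nat) + nat) \<Rightarrow> bool" where
  "Gb_E b k \<delta> = join_E (Hb_V b k) (Hb_E b k) (T_V (\<delta> - k)) T_E"

end

theory Submission
  imports Defs
begin

text \<open>Upper bound: removing any vertex v from a minimal kTDS S leaves some vertex x with fewer
  than k neighbours in S, so x has exactly k neighbours in S. All other neighbours of x lie
  outside S, hence \<open>\<delta> \<le> deg x \<le> k + (n - |S|)\<close>.
  Sharpness: in \<open>H\<^sub>b \<or> T\<close> the vertex set of \<open>H\<^sub>b\<close> is a kTDS, since each clique vertex has k
  neighbours in its own clique and each vertex of T sees all of \<open>H\<^sub>b\<close>; it is minimal because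
  deleting a clique vertex leaves the other vertices of its clique with only k - 1 neighbours.
  Its size is \<open>b(k+1) = n - \<delta> + k\<close>.\<close>

lemma degree_ge_min_degree:
  assumes "finite V" and "x \<in> V"
  shows "min_degree V E \<le> degree V E x"
  unfolding min_degree_def using assms by simp

lemma degree_le_card:
  assumes "finite V"
  shows "degree V E x \<le> card V"
  unfolding degree_def nbhd_def using assms by (intro card_mono) auto

lemma is_kTDS_vertex_set:
  assumes "finite V" and "k \<le> min_degree V E"
  shows "is_kTDS V E k V"
proof -
  have "k \<le> card (nbhd V E x \<inter> V)" if "x \<in> V" for x
    using degree_ge_min_degree[OF assms(1) that, of E] assms(2)
    by (simp add: degree_def nbhd_def Int_absorb2)
  then show ?thesis by (simp add: is_kTDS_def)
qed

lemma ex_minimal_kTDS: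
  assumes "finite V" and "is_kTDS V E k T"
  shows "\<exists>S. is_minimal_kTDS V E k S"
proof -
  obtain S where S: "is_kTDS V E k S" and least: "\<And>U. is_kTDS V E k U \<Longrightarrow> card S \<le> card U"
    using ex_has_least_nat[of "is_kTDS V E k" T card] assms(2) by blast
  have "finite S" using S assms(1) by (auto simp: is_kTDS_def intro: finite_subset)
  then have "\<not> is_kTDS V E k U" if "U \<subset> S" for U
    using least[of U] psubset_card_mono[OF _ that] by fastforce
  with S show ?thesis by (auto simp: is_minimal_kTDS_def)
qed

lemma finite_minimal_kTDS_cards:
  assumes "finite V"
  shows "finite {card S | S. is_minimal_kTDS V E k S}"
proof (rule finite_subset)
  show "{card S | S. is_minimal_kTDS V E k S} \<subseteq> card ` Pow V"
    by (auto simp: is_minimal_kTDS_def is_kTDS_def)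
qed (use assms in simp)

lemma card_minimal_kTDS_le_upper_ktuple_tdom:
  assumes "finite V" and "is_minimal_kTDS V E k S"
  shows "card S \<le> upper_ktuple_tdom V E k"
  unfolding upper_ktuple_tdom_def
  using finite_minimal_kTDS_cards[OF assms(1)] assms(2) by (intro Max_ge) auto

lemma minimal_kTDS_critical_vertex:
  assumes "is_minimal_kTDS V E k S" and "v \<in> S"
  obtains x where "x \<in> V" and "v \<in> nbhd V E x" and "card (nbhd V E x \<inter> S) = k"
proof -
  have S: "is_kTDS V E k S" and "\<not> is_kTDS V E k (S - {v})"
    using assms by (auto simp: is_minimal_kTDS_def)
  then obtain x where x: "x \<in> V" and less: "card (nbhd V E x \<inter> (S - {v})) < k"
    by (auto simp: is_kTDS_def not_le)
  have ge: "k \<le> card (nbhd V E x \<inter> S)" using S x by (simp add: is_kTDS_def)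
  have v: "v \<in> nbhd V E x"
  proof (rule ccontr)
    assume "v \<notin> nbhd V E x"
    then have "nbhd V E x \<inter> (S - {v}) = nbhd V E x \<inter> S" by auto
    then show False using less ge by simp
  qed
  have "nbhd V E x \<inter> (S - {v}) = (nbhd V E x \<inter> S) - {v}" by auto
  then have "card (nbhd V E x \<inter> (S - {v})) = card (nbhd V E x \<inter> S) - 1"
    using v assms(2) by (simp add: card_Diff_singleton)
  with less ge have "card (nbhd V E x \<inter> S) = k" by linarith
  with x v show thesis by (rule that)
qed

lemma card_minimal_kTDS_le:
  assumes fin: "finite V" and "V \<noteq> {}" and S: "is_minimal_kTDS V E k S"
  shows "card S + min_degree V E \<le> card V + k"
proof -
  have "S \<subseteq> V" using S by (simp add: is_minimal_kTDS_def is_kTDS_def)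
  obtain x where x: "x \<in> V" and few: "card (nbhd V E x \<inter> S) \<le> k"
  proof (cases "S = {}")
    case True
    with \<open>V \<noteq> {}\<close> that show thesis by auto
  next
    case False
    then obtain v where "v \<in> S" by auto
    with S obtain x where "x \<in> V" and "card (nbhd V E x \<inter> S) = k"
      by (blast elim: minimal_kTDS_critical_vertex)
    with that show thesis by simp
  qed
  have finN: "finite (nbhd V E x)" using fin by (simp add: nbhd_def)
  have "degree V E x = card (nbhd V E x \<inter> S) + card (nbhd V E x - S)"
    unfolding degree_def using finN by (rule card_Int_Diff)
  also have "card (nbhd V E x - S) \<le> card (V - S)"
    using fin by (intro card_mono) (auto simp: nbhd_def)
  also have "card (V - S) = card V - card S"
    using \<open>S \<subseteq> V\<close> fin by (simp add: card_Diff_subset finite_subset)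
  finally have "degree V E x \<le> k + (card V - card S)" using few by simp
  moreover have "card S \<le> card V" using \<open>S \<subseteq> V\<close> fin by (rule card_mono[rotated])
  ultimately show ?thesis using degree_ge_min_degree[OF fin x, of E] by linarith
qed

lemma upper_ktuple_tdom_le:
  assumes fin: "finite V" and "V \<noteq> {}" and "k \<le> min_degree V E"
  shows "upper_ktuple_tdom V E k + min_degree V E \<le> card V + k"
proof -
  obtain S0 where "is_minimal_kTDS V E k S0"
    using ex_minimal_kTDS[OF fin is_kTDS_vertex_set[OF assms(1,3)]] by blast
  then have "{card S | S. is_minimal_kTDS V E k S} \<noteq> {}" by auto
  moreover have "min_degree V E \<le> card V"
    using \<open>V \<noteq> {}\<close> degree_ge_min_degree[OF fin] degree_le_card[OF fin] by (meson ex_in_conv le_trans)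
  ultimately have "upper_ktuple_tdom V E k \<le> card V + k - min_degree V E"
    unfolding upper_ktuple_tdom_def using card_minimal_kTDS_le[OF fin \<open>V \<noteq> {}\<close>]
    by (intro Max.boundedI finite_minimal_kTDS_cards[OF fin]) fastforce+
  with \<open>min_degree V E \<le> card V\<close> show ?thesis by simp
qed

lemma Hb_V_eq: "Hb_V b k = {..<b} \<times> {..<k + 1}"
  by (auto simp: Hb_V_def)

lemma Inl_in_Gb_V [simp]: "Inl u \<in> Gb_V b k \<delta> \<longleftrightarrow> u \<in> Hb_V b k"
  by (auto simp: Gb_V_def join_V_def)

lemma Inr_in_Gb_V [simp]: "Inr t \<in> Gb_V b k \<delta> \<longleftrightarrow> t < \<delta> - k"
  by (auto simp: Gb_V_def join_V_def T_V_def)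

lemma finite_Gb_V: "finite (Gb_V b k \<delta>)"
  by (simp add: Gb_V_def join_V_def Hb_V_eq T_V_def)

lemma card_Gb_V: "card (Gb_V b k \<delta>) = b * (k + 1) + (\<delta> - k)"
  unfolding Gb_V_def join_V_def
  by (subst card_Un_disjoint) (auto simp: card_image Hb_V_eq T_V_def)

lemma nbhd_Gb_Inl:
  assumes "(i, j) \<in> Hb_V b k"
  shows "nbhd (Gb_V b k \<delta>) (Gb_E b k \<delta>) (Inl (i, j))
           = Inl ` ({i} \<times> ({..<k + 1} - {j})) \<union> Inr ` {..<\<delta> - k}"
  using assms by (auto simp: nbhd_def Gb_E_def Gb_V_def join_V_def Hb_E_def Hb_V_def T_V_def)

lemma nbhd_Gb_Inr:
  assumes "t < \<delta> - k"
  shows "nbhd (Gb_V b k \<delta>) (Gb_E b k \<delta>) (Inr t) = Inl ` Hb_V b k"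
  using assms by (auto simp: nbhd_def Gb_E_def Gb_V_def join_V_def T_V_def T_E_def)

lemma card_clique_nbhd:
  assumes "(i, j) \<in> Hb_V b k"
  shows "card (Inl ` ({i} \<times> ({..<k + 1} - {j})) :: ((nat \<times> nat) + nat) set) = k"
proof -
  have "j < k + 1" using assms by (simp add: Hb_V_def)
  then have "card ({..<k + 1} - {j}) = k" by (subst card_Diff_singleton) auto
  then show ?thesis by (simp add: card_image card_cartesian_product_singleton)
qed

lemma degree_Gb_Inl:
  assumes "(i, j) \<in> Hb_V b k"
  shows "degree (Gb_V b k \<delta>) (Gb_E b k \<delta>) (Inl (i, j)) = k + (\<delta> - k)"
  unfolding degree_def nbhd_Gb_Inl[OF assms]
  using card_clique_nbhd[OF assms] by (subst card_Un_disjoint) (auto simp: card_image)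

lemma degree_Gb_Inr:
  assumes "t < \<delta> - k"
  shows "degree (Gb_V b k \<delta>) (Gb_E b k \<delta>) (Inr t) = b * (k + 1)"
  unfolding degree_def nbhd_Gb_Inr[OF assms] by (simp add: card_image Hb_V_eq)

lemma min_degree_Gb:
  assumes "0 < b" and "k \<le> \<delta>" and "\<delta> \<le> b * (k + 1)"
  shows "min_degree (Gb_V b k \<delta>) (Gb_E b k \<delta>) = \<delta>"
  unfolding min_degree_def
proof (rule Min_eqI)
  let ?V = "Gb_V b k \<delta>" and ?E = "Gb_E b k \<delta>"
  show "finite (degree ?V ?E ` ?V)" using finite_Gb_V by simp
  have "(0, 0) \<in> Hb_V b k" using assms(1) by (simp add: Hb_V_def)
  then show "\<delta> \<in> degree ?V ?E ` ?V"
    using degree_Gb_Inl[of 0 0 b k \<delta>] assms(2) by (metis Inl_in_Gb_V image_eqI le_add_diff_inverse)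
  fix d assume "d \<in> degree ?V ?E ` ?V"
  then obtain v where "v \<in> ?V" and "d = degree ?V ?E v" by auto
  then show "\<delta> \<le> d"
    using assms(2,3) by (cases v) (auto simp: degree_Gb_Inl degree_Gb_Inr)
qed

lemma is_minimal_kTDS_Gb_Hb:
  assumes "0 < b" and "1 \<le> k"
  shows "is_minimal_kTDS (Gb_V b k \<delta>) (Gb_E b k \<delta>) k (Inl ` Hb_V b k)"
proof -
  let ?V = "Gb_V b k \<delta>" and ?E = "Gb_E b k \<delta>" and ?S = "Inl ` Hb_V b k"
  have clique_part: "nbhd ?V ?E (Inl (i, j)) \<inter> ?S = Inl ` ({i} \<times> ({..<k + 1} - {j}))"
    if "(i, j) \<in> Hb_V b k" for i j
    using that unfolding nbhd_Gb_Inl[OF that] by (auto simp: Hb_V_def)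
  have "k \<le> card (nbhd ?V ?E v \<inter> ?S)" if "v \<in> ?V" for v
  proof (cases v)
    case (Inl u)
    with that show ?thesis
      by (cases u) (use clique_part card_clique_nbhd in simp)
  next
    case (Inr t)
    have "k \<le> b * (k + 1)" using assms(1) by (cases b) auto
    with that Inr show ?thesis by (simp add: nbhd_Gb_Inr card_image Hb_V_eq)
  qed
  then have kTDS: "is_kTDS ?V ?E k ?S" by (auto simp: is_kTDS_def)
  have "\<not> is_kTDS ?V ?E k T" if "T \<subset> ?S" for T
  proof
    assume T: "is_kTDS ?V ?E k T"
    from \<open>T \<subset> ?S\<close> obtain i j where ij: "(i, j) \<in> Hb_V b k" "Inl (i, j) \<notin> T" by auto
    define j' :: nat where "j' = (if j = 0 then 1 else 0)"
    have j': "(i, j') \<in> Hb_V b k" "j' \<noteq> j" using ij assms(2) by (auto simp: Hb_V_def j'_def)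
    let ?N = "nbhd ?V ?E (Inl (i, j'))"
    have "Inl (i, j) \<in> ?N \<inter> ?S" using ij j' by (auto simp: nbhd_Gb_Inl[OF j'(1)] Hb_V_def)
    then have "?N \<inter> T \<subset> ?N \<inter> ?S" using \<open>T \<subset> ?S\<close> ij(2) by blast
    moreover have "finite (?N \<inter> ?S)"
      by (rule finite_subset[OF _ finite_Gb_V]) (auto simp: nbhd_def)
    moreover have "card (?N \<inter> ?S) = k" using card_clique_nbhd[OF j'(1)] clique_part[OF j'(1)] by simp
    ultimately have "card (?N \<inter> T) < k" by (metis psubset_card_mono)
    moreover have "Inl (i, j') \<in> ?V" using j'(1) by simp
    ultimately show False using T unfolding is_kTDS_def by (meson not_le)
  qed
  with kTDS show ?thesis by (simp add: is_minimal_kTDS_def)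
qed

lemma upper_ktuple_tdom_Gb:
  assumes "1 \<le> k" and "k \<le> \<delta>" and "\<delta> \<le> b * (k + 1)"
  shows "upper_ktuple_tdom (Gb_V b k \<delta>) (Gb_E b k \<delta>) k = b * (k + 1)"
proof (rule antisym)
  let ?V = "Gb_V b k \<delta>" and ?E = "Gb_E b k \<delta>"
  have "0 < b" using assms by (cases b) auto
  have "min_degree ?V ?E = \<delta>" using min_degree_Gb[OF \<open>0 < b\<close> assms(2,3)] .
  moreover have "Inl (0, 0) \<in> ?V" using \<open>0 < b\<close> by (simp add: Hb_V_def)
  then have "?V \<noteq> {}" by blast
  ultimately have "upper_ktuple_tdom ?V ?E k + \<delta> \<le> card ?V + k"
    using upper_ktuple_tdom_le[OF finite_Gb_V] assms(2) by metis
  then show "upper_ktuple_tdom ?V ?E k \<le> b * (k + 1)"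
    using card_Gb_V[of b k \<delta>] assms(2) by simp
  have "b * (k + 1) = card (Inl ` Hb_V b k :: ((nat \<times> nat) + nat) set)"
    by (simp add: card_image Hb_V_eq)
  also have "\<dots> \<le> upper_ktuple_tdom ?V ?E k"
    using \<open>0 < b\<close> assms(1)
    by (intro card_minimal_kTDS_le_upper_ktuple_tdom finite_Gb_V is_minimal_kTDS_Gb_Hb)
  finally show "b * (k + 1) \<le> upper_ktuple_tdom ?V ?E k" .
qed

lemma le_mult_of_ceiling_divide_le:
  assumes "0 < m" and "real_of_int \<lceil>real d / real m\<rceil> \<le> real b"
  shows "d \<le> b * m"
proof -
  have "real d / real m \<le> real b" using assms(2) le_of_int_ceiling order_trans by blast
  then have "real d \<le> real (b * m)" using assms(1) by (simp add: divide_le_eq)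
  then show ?thesis by linarith
qed

theorem mainTheorem6:
  shows "(\<forall>(V :: 'a set) E k. simple_graph V E \<and> V \<noteq> {} \<and> k \<ge> 1 \<and> min_degree V E \<ge> k + 1
            \<longrightarrow> int (upper_ktuple_tdom V E k) \<le> int (card V) - int (min_degree V E) + int k)
     \<and> (\<forall>k \<delta> b :: nat. k + 1 \<ge> 2 \<and> \<delta> \<ge> k + 1 \<and> real b \<ge> real_of_int \<lceil>real \<delta> / real (k + 1)\<rceil>
            \<longrightarrow> min_degree (Gb_V b k \<delta>) (Gb_E b k \<delta>) = \<delta>
              \<and> card (Gb_V b k \<delta>) = b * (k + 1) + \<delta> - k
              \<and> int (upper_ktuple_tdom (Gb_V b k \<delta>) (Gb_E b k \<delta>) k)
                  = int (card (Gb_V b k \<delta>)) - int \<delta> + int k)"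
proof (intro conjI allI impI)
  fix V :: "'a set" and E k
  assume "simple_graph V E \<and> V \<noteq> {} \<and> k \<ge> 1 \<and> min_degree V E \<ge> k + 1"
  then have "upper_ktuple_tdom V E k + min_degree V E \<le> card V + k"
    by (intro upper_ktuple_tdom_le) (auto simp: simple_graph_def)
  then show "int (upper_ktuple_tdom V E k) \<le> int (card V) - int (min_degree V E) + int k"
    by linarith
next
  fix k \<delta> b :: nat
  assume "k + 1 \<ge> 2 \<and> \<delta> \<ge> k + 1 \<and> real b \<ge> real_of_int \<lceil>real \<delta> / real (k + 1)\<rceil>"
  then have k: "1 \<le> k" and \<delta>: "k \<le> \<delta>" and b: "\<delta> \<le> b * (k + 1)"
    using le_mult_of_ceiling_divide_le[of "k + 1"] by auto
  then have "0 < b" by (cases b) auto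
  show "min_degree (Gb_V b k \<delta>) (Gb_E b k \<delta>) = \<delta>"
    using min_degree_Gb[OF \<open>0 < b\<close> \<delta> b] .
  show "card (Gb_V b k \<delta>) = b * (k + 1) + \<delta> - k"
    using card_Gb_V[of b k \<delta>] \<delta> by simp
  show "int (upper_ktuple_tdom (Gb_V b k \<delta>) (Gb_E b k \<delta>) k)
          = int (card (Gb_V b k \<delta>)) - int \<delta> + int k"
    using upper_ktuple_tdom_Gb[OF k \<delta> b] card_Gb_V[of b k \<delta>] \<delta> by simp
qed

end
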